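(* For every (nonempty) composition $\alpha$, the fundamental quasi-symmetric function $L_\alpha$ is irreducible both in $\mathrm{QSym}$ and in $K=\mathbb Z[[x_1,x_2,\dots]]$ (power series of bounded degree).
   Context: For a composition $\alpha=(\alpha_1,\dots,\alpha_k)$ of $n$ (positive integers), $D(\alpha)=\{\alpha_1,\dots,\alpha_1+\dots+\alpha_{k-1}\}\subseteq[n-1]$, $M_\beta=\sum_{i_1<\dots<i_l}x_{i_1}^{\beta_1}\cdots x_{i_l}^{\beta_l}$, and $L_\alpha=\sum_{|\beta|=n,\,D(\beta)\subseteq D(\alpha)}M_\beta$. $\mathrm{QSym}\subseteq K$ is the ring of quasi-symmetric functions (bounded-degree series whose coefficient of $x_{i_1}^{a_1}\cdots x_{i_k}^{a_k}$ depends only on $(a_1,\dots,a_k)$ for $i_1<\dots<i_k$). The units of $K$ and $\mathrm{QSym}$ are $\pm1$. *)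

theory Defs
  imports "HOL-Algebra.Ring_Divisibility" "HOL-Library.Poly_Mapping"
begin

(* Monomials x_1^{e_1} x_2^{e_2} ... are finitely supported exponent vectors nat \<Rightarrow>\<^sub>0 nat.
   An element of K = Z[[x_1,x_2,...]] (bounded degree) is a coefficient function
   (nat \<Rightarrow>\<^sub>0 nat) \<Rightarrow> int whose support has bounded total degree. *)

type_synonym monom = "nat \<Rightarrow>\<^sub>0 nat"
type_synonym series = "monom \<Rightarrow> int"

definition mdeg :: "monom \<Rightarrow> nat" where
  "mdeg m = (\<Sum>i\<in>Poly_Mapping.keys m. Poly_Mapping.lookup m i)"

definition bounded_degree :: "series \<Rightarrow> bool" where
  "bounded_degree f \<longleftrightarrow> (\<exists>d. \<forall>m. f m \<noteq> 0 \<longrightarrow> mdeg m \<le> d)"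

definition Kmult :: "series \<Rightarrow> series \<Rightarrow> series" where
  "Kmult f g = (\<lambda>m. \<Sum>(a, b)\<in>{(a, b). a + b = m}. f a * g b)"

definition Kone :: series where
  "Kone = (\<lambda>m. if m = 0 then 1 else 0)"

definition K_ring :: "series ring" where
  "K_ring = \<lparr> carrier = {f. bounded_degree f}, monoid.mult = Kmult, one = Kone,
              zero = (\<lambda>_. 0), add = (\<lambda>f g m. f m + g m) \<rparr>"

(* The exponent pattern (a_1,...,a_k) of x_{i_1}^{a_1}...x_{i_k}^{a_k}, i_1<...<i_k, a_j>0 *)
definition pattern :: "monom \<Rightarrow> nat list" where
  "pattern m = map (Poly_Mapping.lookup m) (sorted_list_of_set (Poly_Mapping.keys m))"

definition quasi_symmetric :: "series \<Rightarrow> bool" where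
  "quasi_symmetric f \<longleftrightarrow> bounded_degree f \<and>
     (\<forall>m m'. pattern m = pattern m' \<longrightarrow> f m = f m')"

definition QSym_ring :: "series ring" where
  "QSym_ring = K_ring\<lparr> carrier := {f. quasi_symmetric f} \<rparr>"

definition composition :: "nat list \<Rightarrow> bool" where
  "composition \<alpha> \<longleftrightarrow> \<alpha> \<noteq> [] \<and> (\<forall>a\<in>set \<alpha>. 0 < a)"

definition descents :: "nat list \<Rightarrow> nat set" where
  "descents \<alpha> = {sum_list (take j \<alpha>) | j. 1 \<le> j \<and> j < length \<alpha>}"

definition M_qs :: "nat list \<Rightarrow> series" where
  "M_qs \<beta> = (\<lambda>m. if pattern m = \<beta> then 1 else 0)"

definition L_qs :: "nat list \<Rightarrow> series" where
  "L_qs \<alpha> = (\<lambda>m. \<Sum>\<beta>\<in>{\<beta>. composition \<beta> \<and> sum_list \<beta> = sum_list \<alpha>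
                                  \<and> descents \<beta> \<subseteq> descents \<alpha>}. M_qs \<beta> m)"

end

(*
  Suppose L_alpha = b * c in K and let n = |alpha|. Comparing the lowest and the highest
  degree parts of both sides shows that b and c are homogeneous, of degrees d and e with
  d + e = n, and the coefficient of x_0^n gives b(x_0^d) * c(x_0^e) = 1.

  Splitting a monomial of L_alpha into the part on small and the part on large variables
  corresponds to cutting alpha into a prefix and a suffix. Applied to the last variable, this
  shows that L_gamma has C(q + l - 1, l) monomials in x_1, ..., x_q, where l = length gamma.
  Applied to x_0, it shows that after specialising x_0 = X, x_1 = ... = x_p = 1 and x_i = 0
  for i > p, the coefficient of X^k in the image of L_alpha (k < n) is 0 or such a count for
  a nonempty suffix gamma of alpha, with gamma = alpha for k = 0. For a prime p > n these
  coefficients are divisible by p, and the constant one is not divisible by p^2. The images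
  of b and c have leading coefficients +-1, so Eisenstein's argument forces d = 0 or e = 0,
  and then that factor is the constant +-1, a unit.
*)

theory Submission
  imports Defs "HOL-Computational_Algebra.Polynomial" "HOL-Computational_Algebra.Primes"
begin

lemma keys_add_monom: "Poly_Mapping.keys (a + b) = Poly_Mapping.keys a \<union> Poly_Mapping.keys (b::monom)"
  by (auto simp: in_keys_iff lookup_add)

lemma mdeg_eq_sum_superset:
  assumes "finite A" "Poly_Mapping.keys m \<subseteq> A"
  shows "mdeg m = (\<Sum>i\<in>A. Poly_Mapping.lookup m i)"
  unfolding mdeg_def
  by (rule sum.mono_neutral_left) (use assms in \<open>auto simp: in_keys_iff\<close>)

lemma mdeg_add [simp]: "mdeg (a + b) = mdeg a + mdeg b"
proof -
  have "finite (Poly_Mapping.keys a \<union> Poly_Mapping.keys b)" by simp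
  from mdeg_eq_sum_superset[OF this] show ?thesis
    by (simp add: keys_add_monom lookup_add sum.distrib)
qed

lemma mdeg_single [simp]: "mdeg (Poly_Mapping.single i k) = k"
  by (simp add: mdeg_def)

lemma mdeg_zero [simp]: "mdeg 0 = 0"
  by (simp add: mdeg_def)

lemma mdeg_eq_0_iff [simp]: "mdeg m = 0 \<longleftrightarrow> m = 0"
  unfolding mdeg_def by (auto simp: in_keys_iff intro: poly_mapping_eqI)

lemma lookup_le_mdeg: "Poly_Mapping.lookup m i \<le> mdeg m"
proof (cases "i \<in> Poly_Mapping.keys m")
  case True
  then show ?thesis unfolding mdeg_def by (intro member_le_sum) auto
qed (simp add: in_keys_iff)

lemma monom_split_var:
  fixes m :: monom
  obtains m' where "m = Poly_Mapping.single i (Poly_Mapping.lookup m i) + m'"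
    and "Poly_Mapping.keys m' = Poly_Mapping.keys m - {i}"
proof
  show "m = Poly_Mapping.single i (Poly_Mapping.lookup m i) + (m - Poly_Mapping.single i (Poly_Mapping.lookup m i))"
    by (rule poly_mapping_eqI) (simp add: lookup_add lookup_minus lookup_single when_def)
  show "Poly_Mapping.keys (m - Poly_Mapping.single i (Poly_Mapping.lookup m i)) = Poly_Mapping.keys m - {i}"
    by (auto simp: in_keys_iff lookup_minus lookup_single when_def split: if_splits)
qed

lemma eq_single_if_keys_subset:
  assumes "Poly_Mapping.keys u \<subseteq> {i}"
  shows "u = Poly_Mapping.single i (mdeg u)"
proof (rule poly_mapping_eqI)
  fix k
  have "mdeg u = Poly_Mapping.lookup u i" using mdeg_eq_sum_superset[of "{i}" u] assms by simp
  then show "Poly_Mapping.lookup u k = Poly_Mapping.lookup (Poly_Mapping.single i (mdeg u)) k"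
    using assms by (cases "k = i") (auto simp: in_keys_iff lookup_single)
qed

definition monoms_upto :: "nat set \<Rightarrow> nat \<Rightarrow> monom set" where
  "monoms_upto V D = {m. Poly_Mapping.keys m \<subseteq> V \<and> mdeg m \<le> D}"

lemma finite_monoms_upto:
  assumes "finite V"
  shows "finite (monoms_upto V D)"
proof -
  let ?restr = "\<lambda>m. restrict (Poly_Mapping.lookup m) V"
  have "inj_on ?restr (monoms_upto V D)"
  proof (rule inj_onI, rule poly_mapping_eqI)
    fix x y k assume x: "x \<in> monoms_upto V D" and y: "y \<in> monoms_upto V D"
      and eq: "?restr x = ?restr y"
    show "Poly_Mapping.lookup x k = Poly_Mapping.lookup y k"
    proof (cases "k \<in> V")
      case True
      then show ?thesis using fun_cong[OF eq, of k] by simp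
    next
      case False
      then have "k \<notin> Poly_Mapping.keys x" "k \<notin> Poly_Mapping.keys y"
        using x y unfolding monoms_upto_def by blast+
      then show ?thesis by (simp add: in_keys_iff)
    qed
  qed
  moreover have "?restr ` monoms_upto V D \<subseteq> PiE V (\<lambda>_. {0..D})"
  proof
    fix f assume "f \<in> ?restr ` monoms_upto V D"
    then obtain m where m: "mdeg m \<le> D" "f = ?restr m" unfolding monoms_upto_def by blast
    have "Poly_Mapping.lookup m i \<le> D" for i using lookup_le_mdeg[of m i] m(1) by linarith
    then show "f \<in> PiE V (\<lambda>_. {0..D})" unfolding m(2) by (simp add: PiE_iff)
  qed
  moreover have "finite (PiE V (\<lambda>_. {0..D}))"
    using assms by (simp add: finite_PiE)
  ultimately show ?thesis
    using finite_imageD finite_subset by blast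
qed

lemma finite_add_decompositions: "finite {(a, b). a + b = (m::monom)}"
proof (rule finite_subset)
  let ?M = "monoms_upto (Poly_Mapping.keys m) (mdeg m)"
  show "{(a, b). a + b = m} \<subseteq> ?M \<times> ?M"
    by (auto simp: monoms_upto_def keys_add_monom)
qed (simp add: finite_monoms_upto)

section \<open>Multiplication in \<open>K\<close> and homogeneous factors\<close>

lemma Kmult_eq_single_term:
  assumes "u0 + v0 = w"
    and "\<And>u v. u + v = w \<Longrightarrow> b u \<noteq> 0 \<Longrightarrow> c v \<noteq> 0 \<Longrightarrow> u = u0 \<and> v = v0"
  shows "Kmult b c w = b u0 * c v0"
proof -
  have "Kmult b c w = (\<Sum>(u, v)\<in>{(u, v). u + v = w}. b u * c v)"
    by (simp add: Kmult_def)
  also have "\<dots> = b u0 * c v0 + (\<Sum>(u, v)\<in>{(u, v). u + v = w} - {(u0, v0)}. b u * c v)"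
    using assms(1) by (subst sum.remove[of _ "(u0, v0)"]) (auto simp: finite_add_decompositions)
  also have "(\<Sum>(u, v)\<in>{(u, v). u + v = w} - {(u0, v0)}. b u * c v) = 0"
    using assms(2) by (intro sum.neutral) auto
  finally show ?thesis by simp
qed

lemma Kmult_zero_left [simp]: "Kmult (\<lambda>_. 0) c = (\<lambda>_. 0)"
  and Kmult_zero_right [simp]: "Kmult b (\<lambda>_. 0) = (\<lambda>_. 0)"
  by (simp_all add: Kmult_def)

lemma Kmult_at_0: "Kmult b c 0 = b 0 * c 0"
proof (rule Kmult_eq_single_term)
  fix u v :: monom assume "u + v = 0"
  then have "mdeg u + mdeg v = 0" by (metis mdeg_add mdeg_eq_0_iff)
  then show "u = 0 \<and> v = 0" by simp
qed simp

definition Kconst :: "int \<Rightarrow> series" where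
  "Kconst u = (\<lambda>m. if m = 0 then u else 0)"

lemma Kmult_Kconst_right: "Kmult b (Kconst u) = (\<lambda>m. b m * u)"
proof
  fix w
  have "Kmult b (Kconst u) w = b w * Kconst u 0"
    by (rule Kmult_eq_single_term) (auto simp: Kconst_def split: if_splits)
  then show "Kmult b (Kconst u) w = b w * u" by (simp add: Kconst_def)
qed

lemma Kmult_Kconst_sign: "u \<in> {1, -1} \<Longrightarrow> Kmult (Kconst u) (Kconst u) = Kone"
  unfolding Kmult_Kconst_right by (auto simp: Kone_def Kconst_def)

definition homogeneous :: "nat \<Rightarrow> series \<Rightarrow> bool" where
  "homogeneous d f \<longleftrightarrow> (\<forall>m. f m \<noteq> 0 \<longrightarrow> mdeg m = d)"

lemma homogeneous_0_imp_Kconst: "homogeneous 0 f \<Longrightarrow> f = Kconst (f 0)"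
  by (rule ext) (auto simp: homogeneous_def Kconst_def)

lemma Kmult_at_single_homogeneous:
  assumes "homogeneous d b" "homogeneous e c"
  shows "Kmult b c (Poly_Mapping.single i (d + e)) = b (Poly_Mapping.single i d) * c (Poly_Mapping.single i e)"
proof (rule Kmult_eq_single_term)
  show "Poly_Mapping.single i d + Poly_Mapping.single i e = Poly_Mapping.single i (d + e)"
    by (simp add: single_add)
  fix u v assume uv: "u + v = Poly_Mapping.single i (d + e)" and "b u \<noteq> 0" "c v \<noteq> 0"
  then have "mdeg u = d" "mdeg v = e" using assms by (simp_all add: homogeneous_def)
  moreover have "Poly_Mapping.keys u \<subseteq> {i}" "Poly_Mapping.keys v \<subseteq> {i}"
    using arg_cong[OF uv, of Poly_Mapping.keys] by (auto simp: keys_add_monom split: if_splits)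
  ultimately show "u = Poly_Mapping.single i d \<and> v = Poly_Mapping.single i e"
    by (metis eq_single_if_keys_subset)
qed

text \<open>Among the monomials of the two extreme-degree parts, the largest ones for the
  lexicographic order (which is compatible with \<open>+\<close>) multiply without cancellation.\<close>

lemma Kmult_nonzero_at_extreme_degree:
  assumes bu: "b u \<noteq> 0" and cv: "c v \<noteq> 0"
    and extreme: "\<And>u' v'. b u' \<noteq> 0 \<Longrightarrow> c v' \<noteq> 0 \<Longrightarrow> mdeg u' + mdeg v' = mdeg u + mdeg v
                    \<Longrightarrow> mdeg u' = mdeg u"
  shows "\<exists>w. Kmult b c w \<noteq> 0 \<and> mdeg w = mdeg u + mdeg v"
proof -
  define V where "V = Poly_Mapping.keys u \<union> Poly_Mapping.keys v"
  define P where "P = {u'. b u' \<noteq> 0 \<and> mdeg u' = mdeg u \<and> Poly_Mapping.keys u' \<subseteq> V}"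
  define Q where "Q = {v'. c v' \<noteq> 0 \<and> mdeg v' = mdeg v \<and> Poly_Mapping.keys v' \<subseteq> V}"
  have "finite V" by (simp add: V_def)
  then have fin: "finite P" "finite Q"
    by (auto intro: finite_subset[OF _ finite_monoms_upto[of V "mdeg u"]]
                    finite_subset[OF _ finite_monoms_upto[of V "mdeg v"]] simp: P_def Q_def monoms_upto_def)
  have "u \<in> P" "v \<in> Q" using bu cv by (auto simp: P_def Q_def V_def)
  then have u0: "Max P \<in> P" and v0: "Max Q \<in> Q" using fin by (auto intro: Max_in)
  have "Kmult b c (Max P + Max Q) = b (Max P) * c (Max Q)"
  proof (rule Kmult_eq_single_term[OF refl])
    fix u' v' assume uv: "u' + v' = Max P + Max Q" and bu': "b u' \<noteq> 0" and cv': "c v' \<noteq> 0"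
    have "mdeg u' + mdeg v' = mdeg u + mdeg v"
      using u0 v0 arg_cong[OF uv, of mdeg] by (simp add: P_def Q_def)
    moreover have "Poly_Mapping.keys u' \<union> Poly_Mapping.keys v' \<subseteq> V"
      using u0 v0 arg_cong[OF uv, of Poly_Mapping.keys] by (auto simp: P_def Q_def keys_add_monom)
    ultimately have "u' \<in> P" "v' \<in> Q"
      using extreme[OF bu' cv'] bu' cv' by (auto simp: P_def Q_def)
    then have le: "u' \<le> Max P" "v' \<le> Max Q" using fin by auto
    have "u' = Max P"
    proof (rule ccontr)
      assume "u' \<noteq> Max P"
      then have "u' + v' < Max P + v'" using le(1) by (simp add: add_strict_right_mono)
      also have "\<dots> \<le> Max P + Max Q" using le(2) by (rule add_left_mono)
      finally show False using uv by simp
    qed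
    then show "u' = Max P \<and> v' = Max Q" using uv by simp
  qed
  moreover have "b (Max P) * c (Max Q) \<noteq> 0" using u0 v0 by (simp add: P_def Q_def)
  ultimately show ?thesis using u0 v0 by (intro exI[of _ "Max P + Max Q"]) (simp add: P_def Q_def)
qed

lemma obtain_extreme_degree_monoms:
  assumes "bounded_degree f" "f \<noteq> (\<lambda>_. 0)"
  obtains lo hi where "f lo \<noteq> 0" "f hi \<noteq> 0" "\<And>m. f m \<noteq> 0 \<Longrightarrow> mdeg lo \<le> mdeg m \<and> mdeg m \<le> mdeg hi"
proof -
  define Ds where "Ds = mdeg ` {m. f m \<noteq> 0}"
  obtain D where "\<And>m. f m \<noteq> 0 \<Longrightarrow> mdeg m \<le> D"
    using assms(1) unfolding bounded_degree_def by blast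
  then have "finite Ds" by (auto intro: finite_subset[of _ "{0..D}"] simp: Ds_def)
  moreover have "Ds \<noteq> {}" using assms(2) by (auto simp: Ds_def)
  ultimately have "Min Ds \<in> Ds" "Max Ds \<in> Ds" "\<forall>d\<in>Ds. Min Ds \<le> d \<and> d \<le> Max Ds" by auto
  then obtain lo hi where "f lo \<noteq> 0" "f hi \<noteq> 0" "Min Ds = mdeg lo" "Max Ds = mdeg hi"
    by (auto simp: Ds_def)
  then show ?thesis using that \<open>\<forall>d\<in>Ds. Min Ds \<le> d \<and> d \<le> Max Ds\<close> by (auto simp: Ds_def)
qed

lemma homogeneous_factors:
  assumes "bounded_degree b" "bounded_degree c"
    and hom: "homogeneous n (Kmult b c)" and nz: "Kmult b c \<noteq> (\<lambda>_. 0)"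
  obtains d e where "d + e = n" "homogeneous d b" "homogeneous e c"
proof -
  have "b \<noteq> (\<lambda>_. 0)" "c \<noteq> (\<lambda>_. 0)" using nz by auto
  obtain lb hb where nzb: "b lb \<noteq> 0" "b hb \<noteq> 0"
    and degb: "\<And>m. b m \<noteq> 0 \<Longrightarrow> mdeg lb \<le> mdeg m \<and> mdeg m \<le> mdeg hb"
    using obtain_extreme_degree_monoms[OF assms(1) \<open>b \<noteq> (\<lambda>_. 0)\<close>] by blast
  obtain lc hc where nzc: "c lc \<noteq> 0" "c hc \<noteq> 0"
    and degc: "\<And>m. c m \<noteq> 0 \<Longrightarrow> mdeg lc \<le> mdeg m \<and> mdeg m \<le> mdeg hc"
    using obtain_extreme_degree_monoms[OF assms(2) \<open>c \<noteq> (\<lambda>_. 0)\<close>] by blast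
  have "mdeg u' = mdeg lb" if "b u' \<noteq> 0" "c v' \<noteq> 0" "mdeg u' + mdeg v' = mdeg lb + mdeg lc" for u' v'
    using degb[OF that(1)] degc[OF that(2)] that(3) by linarith
  then obtain w where "Kmult b c w \<noteq> 0" "mdeg w = mdeg lb + mdeg lc"
    using Kmult_nonzero_at_extreme_degree[of b lb c lc] nzb nzc by blast
  with hom have low: "mdeg lb + mdeg lc = n" by (simp add: homogeneous_def)
  have "mdeg u' = mdeg hb" if "b u' \<noteq> 0" "c v' \<noteq> 0" "mdeg u' + mdeg v' = mdeg hb + mdeg hc" for u' v'
    using degb[OF that(1)] degc[OF that(2)] that(3) by linarith
  then obtain w where "Kmult b c w \<noteq> 0" "mdeg w = mdeg hb + mdeg hc"
    using Kmult_nonzero_at_extreme_degree[of b hb c hc] nzb nzc by blast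
  with hom have high: "mdeg hb + mdeg hc = n" by (simp add: homogeneous_def)
  have "mdeg lb = mdeg hb" "mdeg lc = mdeg hc"
    using low high degb[OF nzb(1)] degc[OF nzc(1)] by linarith+
  then have "homogeneous (mdeg lb) b" "homogeneous (mdeg lc) c"
    using degb degc unfolding homogeneous_def by (metis le_antisym)+
  with low show ?thesis by (rule that)
qed

lemma pattern_zero [simp]: "pattern 0 = []"
  by (simp add: pattern_def)

lemma pattern_eq_Nil_iff [simp]: "pattern m = [] \<longleftrightarrow> m = 0"
  unfolding pattern_def by simp

lemma sum_list_pattern [simp]: "sum_list (pattern m) = mdeg m"
  unfolding pattern_def mdeg_def by (simp add: sum_list_distinct_conv_sum_set)

lemma composition_pattern_iff: "composition (pattern m) \<longleftrightarrow> m \<noteq> 0"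
  unfolding composition_def pattern_def by (auto simp: in_keys_iff)

lemma pattern_single: "0 < j \<Longrightarrow> pattern (Poly_Mapping.single x j) = [j]"
  unfolding pattern_def by simp

lemma sorted_list_of_set_Un_separated:
  fixes A B :: "'a::linorder set"
  assumes "finite A" "finite B" "\<forall>a\<in>A. \<forall>b\<in>B. a < b"
  shows "sorted_list_of_set (A \<union> B) = sorted_list_of_set A @ sorted_list_of_set B"
proof (rule sorted_list_of_set_unique[THEN iffD1])
  have "A \<inter> B = {}" using assms(3) by fastforce
  then show "sorted_wrt (<) (sorted_list_of_set A @ sorted_list_of_set B) \<and>
      set (sorted_list_of_set A @ sorted_list_of_set B) = A \<union> B \<and>
      length (sorted_list_of_set A @ sorted_list_of_set B) = card (A \<union> B)"
    using assms by (simp add: sorted_wrt_append card_Un_disjoint)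
qed (use assms in simp)

lemma pattern_add_separated:
  assumes "\<forall>x\<in>Poly_Mapping.keys a. \<forall>y\<in>Poly_Mapping.keys b. x < y"
  shows "pattern (a + b) = pattern a @ pattern b"
proof -
  have "Poly_Mapping.lookup (a + b) x = Poly_Mapping.lookup a x" if "x \<in> Poly_Mapping.keys a" for x
  proof -
    have "x \<notin> Poly_Mapping.keys b" using that assms by blast
    then show ?thesis by (simp add: lookup_add in_keys_iff)
  qed
  moreover have "Poly_Mapping.lookup (a + b) y = Poly_Mapping.lookup b y" if "y \<in> Poly_Mapping.keys b" for y
  proof -
    have "y \<notin> Poly_Mapping.keys a" using that assms by blast
    then show ?thesis by (simp add: lookup_add in_keys_iff)
  qed
  ultimately show ?thesis
    unfolding pattern_def keys_add_monom
    using sorted_list_of_set_Un_separated[OF finite_keys finite_keys assms] by simp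
qed

lemma quasi_symmetric_imp_bounded_degree: "quasi_symmetric f \<Longrightarrow> bounded_degree f"
  unfolding quasi_symmetric_def by (rule conjunct1)

lemma quasi_symmetric_Kconst: "quasi_symmetric (Kconst u)"
  unfolding quasi_symmetric_def bounded_degree_def
proof (intro conjI allI impI exI)
  show "Kconst u m \<noteq> 0 \<Longrightarrow> mdeg m \<le> 0" for m by (simp add: Kconst_def split: if_splits)
  show "Kconst u m = Kconst u m'" if "pattern m = pattern m'" for m m'
    using that pattern_eq_Nil_iff[of m] pattern_eq_Nil_iff[of m'] by (simp add: Kconst_def)
qed

lemma composition_sum_list_pos: "composition \<beta> \<Longrightarrow> 0 < sum_list \<beta>"
  unfolding composition_def by (cases \<beta>) auto

lemma composition_length_le_sum_list: "composition \<beta> \<Longrightarrow> length \<beta> \<le> sum_list \<beta>"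
proof -
  have "(\<forall>a\<in>set xs. 0 < a) \<Longrightarrow> length xs \<le> sum_list xs" for xs :: "nat list"
    by (induction xs) auto
  then show "composition \<beta> \<Longrightarrow> length \<beta> \<le> sum_list \<beta>" unfolding composition_def by blast
qed

lemma composition_take: "composition \<beta> \<Longrightarrow> 0 < i \<Longrightarrow> composition (take i \<beta>)"
  unfolding composition_def by (auto dest: in_set_takeD)

lemma composition_drop: "composition \<beta> \<Longrightarrow> i < length \<beta> \<Longrightarrow> composition (drop i \<beta>)"
  unfolding composition_def by (auto dest: in_set_dropD)

lemma finite_compositions: "finite {\<beta>. composition \<beta> \<and> sum_list \<beta> = n}"
proof (rule finite_subset)
  show "{\<beta>. composition \<beta> \<and> sum_list \<beta> = n} \<subseteq> {xs. set xs \<subseteq> {0..n} \<and> length xs \<le> n}"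
    using composition_length_le_sum_list member_le_sum_list by fastforce
qed (rule finite_lists_length_le, simp)

lemma sum_list_take_strict_mono:
  assumes "composition \<beta>" "i < j" "j \<le> length \<beta>"
  shows "sum_list (take i \<beta>) < sum_list (take j \<beta>)"
proof -
  have "take j \<beta> = take i \<beta> @ take (j - i) (drop i \<beta>)"
    using assms(2) by (metis le_add_diff_inverse less_imp_le take_add)
  moreover have "composition (take (j - i) (drop i \<beta>))"
    using assms by (intro composition_take composition_drop) auto
  ultimately show ?thesis using composition_sum_list_pos[of "take (j - i) (drop i \<beta>)"] by simp
qed

lemma inj_on_sum_list_take:
  assumes "composition \<beta>"
  shows "inj_on (\<lambda>i. sum_list (take i \<beta>)) {..length \<beta>}"
proof (rule inj_onI)
  fix i j assume "i \<in> {..length \<beta>}" "j \<in> {..length \<beta>}" "sum_list (take i \<beta>) = sum_list (take j \<beta>)"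
  then show "i = j"
    using sum_list_take_strict_mono[OF assms, of i j] sum_list_take_strict_mono[OF assms, of j i]
    by (cases i j rule: linorder_cases) auto
qed

lemma sum_list_take_eq_0_iff:
  assumes "composition \<beta>"
  shows "sum_list (take i \<beta>) = 0 \<longleftrightarrow> i = 0"
proof
  assume sum: "sum_list (take i \<beta>) = 0"
  show "i = 0"
  proof (rule ccontr)
    assume "i \<noteq> 0"
    then have "0 < sum_list (take i \<beta>)" using assms by (simp add: composition_sum_list_pos composition_take)
    with sum show False by linarith
  qed
qed simp

lemma sum_list_drop_eq_0_iff:
  assumes "composition \<beta>"
  shows "sum_list (drop i \<beta>) = 0 \<longleftrightarrow> length \<beta> \<le> i"
proof
  assume sum: "sum_list (drop i \<beta>) = 0"
  show "length \<beta> \<le> i"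
  proof (rule ccontr)
    assume "\<not> length \<beta> \<le> i"
    then have "0 < sum_list (drop i \<beta>)" using assms by (simp add: composition_sum_list_pos composition_drop)
    with sum show False by linarith
  qed
qed simp

lemma descents_Nil [simp]: "descents [] = {}"
  and descents_singleton [simp]: "descents [j] = {}"
  unfolding descents_def by auto

lemma descentsE:
  assumes "x \<in> descents \<beta>"
  obtains i where "0 < i" "i < length \<beta>" "x = sum_list (take i \<beta>)"
proof -
  from assms obtain i where "x = sum_list (take i \<beta>)" "1 \<le> i" "i < length \<beta>"
    unfolding descents_def by blast
  then show ?thesis using that[of i] by simp
qed

lemma descents_bounds:
  assumes "composition \<beta>" "x \<in> descents \<beta>"
  shows "0 < x" "x < sum_list \<beta>"
proof -
  obtain i where i: "0 < i" "i < length \<beta>" "x = sum_list (take i \<beta>)"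
    using assms(2) by (rule descentsE)
  show "0 < x" using sum_list_take_strict_mono[OF assms(1), of 0 i] i by simp
  show "x < sum_list \<beta>" using sum_list_take_strict_mono[OF assms(1), of i "length \<beta>"] i by simp
qed

lemma descents_append:
  assumes "xs \<noteq> []" "ys \<noteq> []"
  shows "descents (xs @ ys) = descents xs \<union> insert (sum_list xs) ((+) (sum_list xs) ` descents ys)"
proof (intro equalityI subsetI)
  fix x assume "x \<in> descents (xs @ ys)"
  then obtain j where j: "0 < j" "j < length xs + length ys" "x = sum_list (take j (xs @ ys))"
    by (auto elim: descentsE)
  consider "j < length xs" | "j = length xs" | "length xs < j" by linarith
  then show "x \<in> descents xs \<union> insert (sum_list xs) ((+) (sum_list xs) ` descents ys)"
  proof cases
    case 1
    then show ?thesis using j unfolding descents_def by auto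
  next
    case 3
    then have "sum_list (take (j - length xs) ys) \<in> descents ys"
      using j unfolding descents_def by (intro CollectI exI[of _ "j - length xs"]) auto
    then show ?thesis using j 3 by auto
  qed (use j in simp)
next
  fix x assume "x \<in> descents xs \<union> insert (sum_list xs) ((+) (sum_list xs) ` descents ys)"
  then consider "x \<in> descents xs" | "x = sum_list xs" | y where "y \<in> descents ys" "x = sum_list xs + y"
    by blast
  then show "x \<in> descents (xs @ ys)"
  proof cases
    case 1
    then obtain i where "0 < i" "i < length xs" "x = sum_list (take i xs)" by (rule descentsE)
    then show ?thesis unfolding descents_def by (intro CollectI exI[of _ i]) auto
  next
    case 2
    then show ?thesis
      using assms unfolding descents_def by (intro CollectI exI[of _ "length xs"]) (auto simp: Suc_le_eq)
  next
    case 3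
    then obtain i where "0 < i" "i < length ys" "x = sum_list xs + sum_list (take i ys)"
      by (auto elim: descentsE)
    then show ?thesis
      unfolding descents_def by (intro CollectI exI[of _ "length xs + i"]) auto
  qed
qed

lemma descents_take_drop:
  assumes "0 < i" "i < length \<beta>"
  shows "descents \<beta> = descents (take i \<beta>) \<union>
           insert (sum_list (take i \<beta>)) ((+) (sum_list (take i \<beta>)) ` descents (drop i \<beta>))"
proof -
  have "descents (take i \<beta> @ drop i \<beta>) = descents (take i \<beta>) \<union>
           insert (sum_list (take i \<beta>)) ((+) (sum_list (take i \<beta>)) ` descents (drop i \<beta>))"
    using assms by (intro descents_append) auto
  then show ?thesis by simp
qed

lemma descents_append_subset_iff:
  assumes \<beta>: "composition \<beta>" and xs: "composition xs" and ys: "composition ys"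
  shows "descents (xs @ ys) \<subseteq> descents \<beta> \<longleftrightarrow>
         (\<exists>i\<in>{0<..<length \<beta>}. sum_list xs = sum_list (take i \<beta>) \<and>
            descents xs \<subseteq> descents (take i \<beta>) \<and> descents ys \<subseteq> descents (drop i \<beta>))"
    (is "?L \<longleftrightarrow> ?R")
proof
  define s where "s = sum_list xs"
  have D: "descents (xs @ ys) = descents xs \<union> insert s ((+) s ` descents ys)"
    unfolding s_def using xs ys by (intro descents_append) (auto simp: composition_def)
  {
    assume L: ?L
    then obtain i where i: "0 < i" "i < length \<beta>" "s = sum_list (take i \<beta>)"
      unfolding D by (auto elim: descentsE)
    note D\<beta> = descents_take_drop[OF i(1,2), folded i(3)]
    have "descents xs \<subseteq> descents (take i \<beta>)"
    proof
      fix y assume y: "y \<in> descents xs"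
      then have "y < s" using descents_bounds(2)[OF xs] by (simp add: s_def)
      then show "y \<in> descents (take i \<beta>)"
        using y L D\<beta> D descents_bounds(1)[OF composition_drop[OF \<beta> i(2)]] by auto
    qed
    moreover have "descents ys \<subseteq> descents (drop i \<beta>)"
    proof
      fix y assume y: "y \<in> descents ys"
      then have "0 < y" using descents_bounds(1)[OF ys] by simp
      moreover have "s + y \<in> descents \<beta>" using y L D by blast
      ultimately have "s + y \<in> (+) s ` descents (drop i \<beta>)"
        using D\<beta> i(3) descents_bounds(2)[OF composition_take[OF \<beta> i(1)]] by fastforce
      then show "y \<in> descents (drop i \<beta>)" by auto
    qed
    ultimately show ?R using i unfolding s_def by auto
  next
    assume ?R
    then obtain i where i: "0 < i" "i < length \<beta>" "s = sum_list (take i \<beta>)"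
      and sub: "descents xs \<subseteq> descents (take i \<beta>)" "descents ys \<subseteq> descents (drop i \<beta>)"
      unfolding s_def by auto
    show ?L unfolding D descents_take_drop[OF i(1,2), folded i(3)] using sub by blast
  }
qed

definition L_monom :: "nat list \<Rightarrow> monom \<Rightarrow> bool" where
  "L_monom \<alpha> m \<longleftrightarrow> mdeg m = sum_list \<alpha> \<and> descents (pattern m) \<subseteq> descents \<alpha>"

lemma L_qs_eq_indicator:
  assumes "composition \<alpha>"
  shows "L_qs \<alpha> m = of_bool (L_monom \<alpha> m)"
proof -
  define B where "B = {\<beta>. composition \<beta> \<and> sum_list \<beta> = sum_list \<alpha> \<and> descents \<beta> \<subseteq> descents \<alpha>}"
  have "finite B"
    by (rule finite_subset[OF _ finite_compositions[of "sum_list \<alpha>"]]) (auto simp: B_def)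
  then have "L_qs \<alpha> m = of_bool (pattern m \<in> B)"
    unfolding L_qs_def M_qs_def B_def[symmetric] by (simp add: of_bool_def)
  moreover have "L_monom \<alpha> m \<Longrightarrow> m \<noteq> 0"
    using composition_sum_list_pos[OF assms] unfolding L_monom_def by (metis mdeg_zero less_irrefl)
  moreover have "pattern m \<in> B \<longleftrightarrow> L_monom \<alpha> m \<and> m \<noteq> 0"
    unfolding B_def L_monom_def by (auto simp: composition_pattern_iff)
  ultimately show ?thesis by auto
qed

lemma homogeneous_L_qs: "homogeneous (sum_list \<alpha>) (L_qs \<alpha>)"
  unfolding homogeneous_def
proof (intro allI impI)
  fix m assume "L_qs \<alpha> m \<noteq> 0"
  then obtain \<beta> where "sum_list \<beta> = sum_list \<alpha>" "M_qs \<beta> m \<noteq> 0"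
    unfolding L_qs_def using sum.not_neutral_contains_not_neutral by blast
  moreover from this have "pattern m = \<beta>" unfolding M_qs_def by presburger
  ultimately show "mdeg m = sum_list \<alpha>" by (metis sum_list_pattern)
qed

lemma quasi_symmetric_L_qs: "quasi_symmetric (L_qs \<alpha>)"
  using homogeneous_L_qs[of \<alpha>]
  unfolding quasi_symmetric_def bounded_degree_def homogeneous_def
  by (auto simp: L_qs_def M_qs_def)

lemma L_monom_single: "L_monom \<gamma> (Poly_Mapping.single x j) \<longleftrightarrow> j = sum_list \<gamma>"
  by (cases "j = 0") (auto simp: L_monom_def pattern_single)

lemma L_qs_single: "composition \<alpha> \<Longrightarrow> L_qs \<alpha> (Poly_Mapping.single i (sum_list \<alpha>)) = 1"
  by (simp add: L_qs_eq_indicator L_monom_single)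

lemma L_monom_0_iff: "L_monom \<gamma> 0 \<longleftrightarrow> sum_list \<gamma> = 0"
  by (auto simp: L_monom_def)

lemma not_L_monom_0: "composition \<gamma> \<Longrightarrow> \<not> L_monom \<gamma> 0"
  using composition_sum_list_pos unfolding L_monom_0_iff by fastforce

lemma L_monom_add_separated_nonzero:
  assumes \<beta>: "composition \<beta>" and nz: "m1 \<noteq> 0" "m2 \<noteq> 0"
    and sep: "\<forall>x\<in>Poly_Mapping.keys m1. \<forall>y\<in>Poly_Mapping.keys m2. x < y"
  shows "L_monom \<beta> (m1 + m2) \<longleftrightarrow>
         (\<exists>i\<in>{0<..<length \<beta>}. L_monom (take i \<beta>) m1 \<and> L_monom (drop i \<beta>) m2)"
proof -
  have comp: "composition (pattern m1)" "composition (pattern m2)"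
    using nz by (simp_all add: composition_pattern_iff)
  have split: "sum_list (take i \<beta>) + sum_list (drop i \<beta>) = sum_list \<beta>" for i
    by (simp flip: sum_list_append)
  have L_iff: "L_monom \<beta> (m1 + m2) \<longleftrightarrow>
      mdeg m1 + mdeg m2 = sum_list \<beta> \<and> descents (pattern m1 @ pattern m2) \<subseteq> descents \<beta>"
    unfolding L_monom_def pattern_add_separated[OF sep] by simp
  show ?thesis
  proof
    assume L: "L_monom \<beta> (m1 + m2)"
    then have deg: "sum_list (pattern m1) + sum_list (pattern m2) = sum_list \<beta>" by (simp add: L_iff)
    then obtain i where i: "i \<in> {0<..<length \<beta>}" "mdeg m1 = sum_list (take i \<beta>)"
      and "descents (pattern m1) \<subseteq> descents (take i \<beta>)" "descents (pattern m2) \<subseteq> descents (drop i \<beta>)"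
      using L descents_append_subset_iff[OF \<beta> comp] L_iff by auto
    then have "L_monom (take i \<beta>) m1" "L_monom (drop i \<beta>) m2"
      using deg split[of i] by (auto simp: L_monom_def)
    then show "\<exists>i\<in>{0<..<length \<beta>}. L_monom (take i \<beta>) m1 \<and> L_monom (drop i \<beta>) m2"
      using i(1) by blast
  next
    assume "\<exists>i\<in>{0<..<length \<beta>}. L_monom (take i \<beta>) m1 \<and> L_monom (drop i \<beta>) m2"
    then obtain i where i: "i \<in> {0<..<length \<beta>}" and L: "L_monom (take i \<beta>) m1" "L_monom (drop i \<beta>) m2"
      by blast
    then have deg1: "mdeg m1 = sum_list (take i \<beta>)"
      and deg: "sum_list (pattern m1) + sum_list (pattern m2) = sum_list \<beta>"
      using split[of i] by (simp_all add: L_monom_def)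
    show "L_monom \<beta> (m1 + m2)"
      unfolding L_iff descents_append_subset_iff[OF \<beta> comp]
      using i deg1 L deg by (auto simp: L_monom_def)
  qed
qed

text \<open>The cut points \<open>i = 0\<close> and \<open>i = length \<beta>\<close> account for \<open>m1 = 0\<close> and \<open>m2 = 0\<close>.\<close>

lemma L_monom_add_separated:
  assumes \<beta>: "composition \<beta>"
    and sep: "\<forall>x\<in>Poly_Mapping.keys m1. \<forall>y\<in>Poly_Mapping.keys m2. x < y"
  shows "L_monom \<beta> (m1 + m2) \<longleftrightarrow>
         (\<exists>i\<le>length \<beta>. L_monom (take i \<beta>) m1 \<and> L_monom (drop i \<beta>) m2)"
proof -
  consider "m1 = 0" | "m2 = 0" | "m1 \<noteq> 0" "m2 \<noteq> 0" by blast
  then show ?thesis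
  proof cases
    case 1
    then show ?thesis using sum_list_take_eq_0_iff[OF \<beta>] by (auto simp: L_monom_0_iff)
  next
    case 2
    then show ?thesis using sum_list_drop_eq_0_iff[OF \<beta>] by (auto simp: L_monom_0_iff)
  next
    case 3
    have cut: "i \<in> {0<..<length \<beta>}"
      if "i \<le> length \<beta>" "L_monom (take i \<beta>) m1" "L_monom (drop i \<beta>) m2" for i
    proof -
      have "mdeg m1 = sum_list (take i \<beta>)" "mdeg m2 = sum_list (drop i \<beta>)"
        using that(2,3) by (simp_all add: L_monom_def)
      then have "i \<noteq> 0" "i \<noteq> length \<beta>" using 3 by (metis mdeg_eq_0_iff sum_list.Nil take_0 drop_all order_refl)+
      then show ?thesis using that(1) by simp
    qed
    show ?thesis
      unfolding L_monom_add_separated_nonzero[OF \<beta> 3 sep]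
    proof
      assume "\<exists>i\<in>{0<..<length \<beta>}. L_monom (take i \<beta>) m1 \<and> L_monom (drop i \<beta>) m2"
      then show "\<exists>i\<le>length \<beta>. L_monom (take i \<beta>) m1 \<and> L_monom (drop i \<beta>) m2"
        by (meson greaterThanLessThan_iff less_imp_le_nat)
    qed (use cut in blast)
  qed
qed

section \<open>Counting monomials in finitely many variables\<close>

definition L_monoms :: "nat list \<Rightarrow> nat \<Rightarrow> monom set" where
  "L_monoms \<beta> q = {m. Poly_Mapping.keys m \<subseteq> {1..q} \<and> L_monom \<beta> m}"

lemma finite_L_monoms: "finite (L_monoms \<beta> q)"
  by (rule finite_subset[OF _ finite_monoms_upto[of "{1..q}" "sum_list \<beta>"]])
     (auto simp: L_monoms_def monoms_upto_def L_monom_def)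

lemma L_monoms_Nil: "L_monoms [] q = {0}"
  by (auto simp: L_monoms_def L_monom_def)

lemma L_monoms_0:
  assumes "composition \<beta>"
  shows "L_monoms \<beta> 0 = {}"
  using not_L_monom_0[OF assms] by (auto simp: L_monoms_def)

lemma inj_on_sum_list_drop:
  assumes "composition \<beta>"
  shows "inj_on (\<lambda>i. sum_list (drop i \<beta>)) {..length \<beta>}"
proof (rule inj_onI)
  fix i j assume ij: "i \<in> {..length \<beta>}" "j \<in> {..length \<beta>}" "sum_list (drop i \<beta>) = sum_list (drop j \<beta>)"
  have "sum_list (take k \<beta>) + sum_list (drop k \<beta>) = sum_list \<beta>" for k
    by (simp flip: sum_list_append)
  then have "sum_list (take i \<beta>) = sum_list (take j \<beta>)" using ij(3) by (metis add_right_cancel)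
  then show "i = j" using inj_on_sum_list_take[OF assms] ij(1,2) by (auto dest: inj_onD)
qed

lemma L_monoms_Suc:
  assumes \<beta>: "composition \<beta>"
  shows "L_monoms \<beta> (Suc q) =
           (\<Union>i\<le>length \<beta>. (\<lambda>m. m + Poly_Mapping.single (Suc q) (sum_list (drop i \<beta>))) ` L_monoms (take i \<beta>) q)"
    (is "_ = ?U")
proof (intro equalityI subsetI)
  fix m assume m: "m \<in> L_monoms \<beta> (Suc q)"
  define j where "j = Poly_Mapping.lookup m (Suc q)"
  obtain m' where m_eq: "m = m' + Poly_Mapping.single (Suc q) j"
    and keys: "Poly_Mapping.keys m' = Poly_Mapping.keys m - {Suc q}"
    unfolding j_def by (metis add.commute monom_split_var)
  have "Poly_Mapping.keys m \<subseteq> {1..Suc q}" using m by (simp add: L_monoms_def)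
  then have keys': "Poly_Mapping.keys m' \<subseteq> {1..q}" unfolding keys by (simp add: atLeastAtMostSuc_conv) blast
  then have sep: "\<forall>x\<in>Poly_Mapping.keys m'. \<forall>y\<in>Poly_Mapping.keys (Poly_Mapping.single (Suc q) j). x < y"
    by (simp add: subset_iff le_imp_less_Suc)
  have "L_monom \<beta> (m' + Poly_Mapping.single (Suc q) j)" using m m_eq by (simp add: L_monoms_def)
  then obtain i where i: "i \<le> length \<beta>" "L_monom (take i \<beta>) m'" "j = sum_list (drop i \<beta>)"
    unfolding L_monom_add_separated[OF \<beta> sep] L_monom_single by blast
  then have "m' \<in> L_monoms (take i \<beta>) q" using keys' by (simp add: L_monoms_def)
  then show "m \<in> ?U"
    using i m_eq by blast
next
  fix m assume "m \<in> ?U"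
  then obtain i m' where i: "i \<le> length \<beta>" and m': "m' \<in> L_monoms (take i \<beta>) q"
    and m_eq: "m = m' + Poly_Mapping.single (Suc q) (sum_list (drop i \<beta>))"
    by blast
  have keys': "Poly_Mapping.keys m' \<subseteq> {1..q}" using m' by (simp add: L_monoms_def)
  then have sep: "\<forall>x\<in>Poly_Mapping.keys m'.
      \<forall>y\<in>Poly_Mapping.keys (Poly_Mapping.single (Suc q) (sum_list (drop i \<beta>))). x < y"
    by (simp add: subset_iff le_imp_less_Suc)
  have "L_monom \<beta> m"
    unfolding m_eq L_monom_add_separated[OF \<beta> sep] L_monom_single
    using i m' by (auto simp: L_monoms_def)
  moreover have "Poly_Mapping.keys m \<subseteq> {1..Suc q}"
    using keys' unfolding m_eq keys_add_monom by auto
  ultimately show "m \<in> L_monoms \<beta> (Suc q)" by (simp add: L_monoms_def)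
qed

lemma card_L_monoms_Suc:
  assumes \<beta>: "composition \<beta>"
  shows "card (L_monoms \<beta> (Suc q)) = (\<Sum>i\<le>length \<beta>. card (L_monoms (take i \<beta>) q))"
proof -
  define shift where "shift i = (\<lambda>m. m + Poly_Mapping.single (Suc q) (sum_list (drop i \<beta>)))" for i
  have lookup_shift: "Poly_Mapping.lookup m (Suc q) = sum_list (drop i \<beta>)"
    if "m \<in> shift i ` L_monoms (take i \<beta>) q" for i m
  proof -
    from that obtain m' where "m' \<in> L_monoms (take i \<beta>) q" "m = shift i m'" by blast
    moreover from this have "Poly_Mapping.lookup m' (Suc q) = 0" by (auto simp: L_monoms_def in_keys_iff)
    ultimately show ?thesis by (simp add: shift_def lookup_add)
  qed
  have "card (L_monoms \<beta> (Suc q)) = card (\<Union>i\<le>length \<beta>. shift i ` L_monoms (take i \<beta>) q)"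
    unfolding L_monoms_Suc[OF \<beta>] shift_def ..
  also have "\<dots> = (\<Sum>i\<le>length \<beta>. card (shift i ` L_monoms (take i \<beta>) q))"
  proof (rule card_UN_disjoint)
    show "\<forall>i\<in>{..length \<beta>}. \<forall>j\<in>{..length \<beta>}. i \<noteq> j \<longrightarrow>
        shift i ` L_monoms (take i \<beta>) q \<inter> shift j ` L_monoms (take j \<beta>) q = {}"
    proof (intro ballI impI equals0I)
      fix i j m assume ij: "i \<in> {..length \<beta>}" "j \<in> {..length \<beta>}" "i \<noteq> j"
        and "m \<in> shift i ` L_monoms (take i \<beta>) q \<inter> shift j ` L_monoms (take j \<beta>) q"
      then have "sum_list (drop i \<beta>) = sum_list (drop j \<beta>)" using lookup_shift by (metis IntD1 IntD2)
      with ij show False using inj_onD[OF inj_on_sum_list_drop[OF \<beta>]] by blast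
    qed
  qed (simp_all add: finite_L_monoms)
  also have "\<dots> = (\<Sum>i\<le>length \<beta>. card (L_monoms (take i \<beta>) q))"
    by (intro sum.cong refl card_image) (simp add: shift_def inj_on_def)
  finally show ?thesis .
qed

lemma sum_choose_hockey_stick: "(\<Sum>i\<le>l. (q + i - 1) choose i) = (q + l) choose l"
  by (induction l) (simp_all add: add.commute)

lemma card_L_monoms:
  "composition \<beta> \<Longrightarrow> card (L_monoms \<beta> q) = (q + length \<beta> - 1) choose length \<beta>"
proof (induction q arbitrary: \<beta>)
  case 0
  then have "length \<beta> - 1 < length \<beta>" by (cases \<beta>) (auto simp: composition_def)
  then show ?case by (simp add: L_monoms_0[OF 0])
next
  case (Suc q)
  have "card (L_monoms (take i \<beta>) q) = (q + i - 1) choose i" if "i \<le> length \<beta>" for i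
  proof (cases "i = 0")
    case False
    then show ?thesis using that Suc.IH[OF composition_take[OF Suc.prems]] by (simp add: min_def)
  qed (simp add: L_monoms_Nil)
  then have "card (L_monoms \<beta> (Suc q)) = (\<Sum>i\<le>length \<beta>. (q + i - 1) choose i)"
    unfolding card_L_monoms_Suc[OF Suc.prems] by simp
  then show ?case using sum_choose_hockey_stick[of q "length \<beta>"] by simp
qed

section \<open>Specialisation to one variable\<close>

lemma sum_add_decompositions:
  fixes g :: "monom \<Rightarrow> monom \<Rightarrow> 'a::comm_monoid_add"
  assumes V: "finite V" and g: "\<And>u v. g u v \<noteq> 0 \<Longrightarrow> mdeg u \<le> D1 \<and> mdeg v \<le> D2"
  shows "(\<Sum>m\<in>monoms_upto V (D1 + D2). \<Sum>(u, v)\<in>{(u, v). u + v = m}. g u v)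
           = (\<Sum>u\<in>monoms_upto V D1. \<Sum>v\<in>monoms_upto V D2. g u v)"
proof -
  define A where "A = (\<Union>m\<in>monoms_upto V (D1 + D2). {(u, v). u + v = m})"
  have "A \<subseteq> monoms_upto V (D1 + D2) \<times> monoms_upto V (D1 + D2)"
    unfolding A_def monoms_upto_def by (auto simp: keys_add_monom)
  then have "finite A" using finite_monoms_upto[OF V] by (meson finite_SigmaI finite_subset)
  have "(\<Sum>m\<in>monoms_upto V (D1 + D2). \<Sum>(u, v)\<in>{(u, v). u + v = m}. g u v) = (\<Sum>(u, v)\<in>A. g u v)"
    unfolding A_def
    by (rule sum.UNION_disjoint[symmetric]) (auto simp: finite_monoms_upto[OF V] finite_add_decompositions)
  also have "\<dots> = (\<Sum>(u, v)\<in>monoms_upto V D1 \<times> monoms_upto V D2. g u v)"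
  proof (rule sum.mono_neutral_right[OF \<open>finite A\<close>])
    show "monoms_upto V D1 \<times> monoms_upto V D2 \<subseteq> A"
      unfolding A_def monoms_upto_def by (auto simp: keys_add_monom)
    show "\<forall>x\<in>A - monoms_upto V D1 \<times> monoms_upto V D2. (case x of (u, v) \<Rightarrow> g u v) = 0"
    proof
      fix x assume x: "x \<in> A - monoms_upto V D1 \<times> monoms_upto V D2"
      obtain u v where uv: "x = (u, v)" by fastforce
      have "Poly_Mapping.keys u \<subseteq> V" "Poly_Mapping.keys v \<subseteq> V"
        using x unfolding uv A_def monoms_upto_def by (auto simp: keys_add_monom)
      then have "\<not> (mdeg u \<le> D1 \<and> mdeg v \<le> D2)" using x unfolding uv by (auto simp: monoms_upto_def)
      then show "(case x of (u, v) \<Rightarrow> g u v) = 0" using g uv by auto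
    qed
  qed
  also have "\<dots> = (\<Sum>u\<in>monoms_upto V D1. \<Sum>v\<in>monoms_upto V D2. g u v)"
    by (simp add: sum.cartesian_product)
  finally show ?thesis .
qed

text \<open>The image of \<open>f\<close> under \<open>x\<^sub>0 \<mapsto> X\<close>, \<open>x\<^sub>i \<mapsto> 1\<close> for \<open>i \<in> V - {0}\<close> and \<open>x\<^sub>i \<mapsto> 0\<close> for \<open>i \<notin> V\<close>,
  provided \<open>f\<close> has degree at most \<open>D\<close>.\<close>

definition specialize :: "nat set \<Rightarrow> nat \<Rightarrow> series \<Rightarrow> int poly" where
  "specialize V D f = (\<Sum>m\<in>monoms_upto V D. monom (f m) (Poly_Mapping.lookup m 0))"

lemma specialize_Kmult:
  assumes V: "finite V"
    and b: "\<And>m. b m \<noteq> 0 \<Longrightarrow> mdeg m \<le> D1" and c: "\<And>m. c m \<noteq> 0 \<Longrightarrow> mdeg m \<le> D2"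
  shows "specialize V (D1 + D2) (Kmult b c) = specialize V D1 b * specialize V D2 c"
proof -
  have "specialize V (D1 + D2) (Kmult b c) =
      (\<Sum>m\<in>monoms_upto V (D1 + D2). \<Sum>(u, v)\<in>{(u, v). u + v = m}.
          monom (b u * c v) (Poly_Mapping.lookup u 0 + Poly_Mapping.lookup v 0))"
    unfolding specialize_def Kmult_def monom_sum
    by (intro sum.cong refl) (auto simp: lookup_add)
  also have "\<dots> = (\<Sum>u\<in>monoms_upto V D1. \<Sum>v\<in>monoms_upto V D2.
          monom (b u * c v) (Poly_Mapping.lookup u 0 + Poly_Mapping.lookup v 0))"
    using b c by (intro sum_add_decompositions[OF V]) fastforce
  also have "\<dots> = specialize V D1 b * specialize V D2 c"
    unfolding specialize_def sum_product by (simp add: mult_monom)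
  finally show ?thesis .
qed

lemma coeff_specialize:
  assumes "finite V"
  shows "coeff (specialize V D f) k = (\<Sum>m\<in>{m\<in>monoms_upto V D. Poly_Mapping.lookup m 0 = k}. f m)"
  unfolding specialize_def coeff_sum using finite_monoms_upto[OF assms] by (simp add: sum.inter_filter)

lemma degree_specialize:
  assumes V: "finite V" "0 \<in> V" and nz: "f (Poly_Mapping.single 0 D) \<noteq> 0"
  shows "degree (specialize V D f) = D" and "coeff (specialize V D f) D = f (Poly_Mapping.single 0 D)"
proof -
  have top: "{m \<in> monoms_upto V D. Poly_Mapping.lookup m 0 = D} = {Poly_Mapping.single 0 D}"
  proof (intro equalityI subsetI)
    fix m assume m: "m \<in> {m \<in> monoms_upto V D. Poly_Mapping.lookup m 0 = D}"
    obtain m' where "m = Poly_Mapping.single 0 (Poly_Mapping.lookup m 0) + m'"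
      by (rule monom_split_var)
    then have "m = Poly_Mapping.single 0 D + m'" using m by simp
    moreover from this have "m' = 0" using m by (simp add: monoms_upto_def)
    ultimately show "m \<in> {Poly_Mapping.single 0 D}" by simp
  qed (use V in \<open>auto simp: monoms_upto_def\<close>)
  show coeff: "coeff (specialize V D f) D = f (Poly_Mapping.single 0 D)"
    unfolding coeff_specialize[OF V(1)] top by simp
  have "coeff (specialize V D f) k = 0" if "D < k" for k
  proof -
    have "{m \<in> monoms_upto V D. Poly_Mapping.lookup m 0 = k} = {}"
    proof (rule equals0I)
      fix m assume "m \<in> {m \<in> monoms_upto V D. Poly_Mapping.lookup m 0 = k}"
      then show False using that lookup_le_mdeg[of m 0] by (simp add: monoms_upto_def)
    qed
    then show ?thesis unfolding coeff_specialize[OF V(1)] by (simp only: sum.empty)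
  qed
  then have "degree (specialize V D f) \<le> D" by (simp add: degree_le)
  moreover have "D \<le> degree (specialize V D f)" using coeff nz by (simp add: le_degree)
  ultimately show "degree (specialize V D f) = D" by simp
qed

definition L_monoms_x0 :: "nat list \<Rightarrow> nat \<Rightarrow> nat \<Rightarrow> monom set" where
  "L_monoms_x0 \<alpha> q k = {m. Poly_Mapping.keys m \<subseteq> {1..q} \<and> L_monom \<alpha> (Poly_Mapping.single 0 k + m)}"

lemma L_monom_single_0_add:
  assumes \<alpha>: "composition \<alpha>" and keys: "Poly_Mapping.keys m \<subseteq> {1..q}"
  shows "L_monom \<alpha> (Poly_Mapping.single 0 k + m) \<longleftrightarrow>
           (\<exists>i\<le>length \<alpha>. k = sum_list (take i \<alpha>) \<and> L_monom (drop i \<alpha>) m)"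
proof -
  have "\<forall>x\<in>Poly_Mapping.keys (Poly_Mapping.single 0 k). \<forall>y\<in>Poly_Mapping.keys m. x < y"
    using keys by auto
  from L_monom_add_separated[OF \<alpha> this] show ?thesis by (simp add: L_monom_single)
qed

lemma L_monoms_x0_partial_sum:
  assumes \<alpha>: "composition \<alpha>" and i: "i \<le> length \<alpha>"
  shows "L_monoms_x0 \<alpha> q (sum_list (take i \<alpha>)) = L_monoms (drop i \<alpha>) q"
proof -
  have "L_monom \<alpha> (Poly_Mapping.single 0 (sum_list (take i \<alpha>)) + m) \<longleftrightarrow> L_monom (drop i \<alpha>) m"
    if "Poly_Mapping.keys m \<subseteq> {1..q}" for m
    unfolding L_monom_single_0_add[OF \<alpha> that]
  proof
    assume "\<exists>j\<le>length \<alpha>. sum_list (take i \<alpha>) = sum_list (take j \<alpha>) \<and> L_monom (drop j \<alpha>) m"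
    then obtain j where "j \<le> length \<alpha>" "sum_list (take i \<alpha>) = sum_list (take j \<alpha>)" "L_monom (drop j \<alpha>) m"
      by blast
    moreover from this have "j = i" using inj_on_sum_list_take[OF \<alpha>] i by (auto dest: inj_onD)
    ultimately show "L_monom (drop i \<alpha>) m" by simp
  qed (use i in blast)
  then show ?thesis unfolding L_monoms_x0_def L_monoms_def by blast
qed

lemma L_monoms_x0_not_partial_sum:
  assumes \<alpha>: "composition \<alpha>" and k: "k \<notin> (\<lambda>i. sum_list (take i \<alpha>)) ` {..length \<alpha>}"
  shows "L_monoms_x0 \<alpha> q k = {}"
  using L_monom_single_0_add[OF \<alpha>] k unfolding L_monoms_x0_def by auto

lemma coeff_specialize_L_qs:
  assumes \<alpha>: "composition \<alpha>"
  shows "coeff (specialize {0..p} (sum_list \<alpha>) (L_qs \<alpha>)) k = int (card (L_monoms_x0 \<alpha> p k))"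
proof -
  let ?A = "{m \<in> monoms_upto {0..p} (sum_list \<alpha>). Poly_Mapping.lookup m 0 = k}"
  have "?A \<inter> {m. L_monom \<alpha> m} = (\<lambda>m. Poly_Mapping.single 0 k + m) ` L_monoms_x0 \<alpha> p k"
  proof (intro equalityI subsetI)
    fix m assume m: "m \<in> ?A \<inter> {m. L_monom \<alpha> m}"
    obtain m' where "m = Poly_Mapping.single 0 (Poly_Mapping.lookup m 0) + m'"
      and keys: "Poly_Mapping.keys m' = Poly_Mapping.keys m - {0}"
      by (rule monom_split_var)
    moreover have "Poly_Mapping.keys m' \<subseteq> {1..p}"
      using m unfolding keys monoms_upto_def by auto
    ultimately show "m \<in> (\<lambda>m. Poly_Mapping.single 0 k + m) ` L_monoms_x0 \<alpha> p k"
      using m by (auto simp: L_monoms_x0_def)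
  next
    fix m assume "m \<in> (\<lambda>m. Poly_Mapping.single 0 k + m) ` L_monoms_x0 \<alpha> p k"
    then obtain m' where m': "m = Poly_Mapping.single 0 k + m'" "Poly_Mapping.keys m' \<subseteq> {1..p}"
      "L_monom \<alpha> m" by (auto simp: L_monoms_x0_def)
    then have "Poly_Mapping.lookup m' 0 = 0" by (auto simp: in_keys_iff)
    then have "Poly_Mapping.lookup m 0 = k" using m'(1) by (simp add: lookup_add)
    moreover have "Poly_Mapping.keys m \<subseteq> {0..p}" using m'(1,2) by (auto simp: keys_add_monom)
    moreover have "mdeg m = sum_list \<alpha>" using m'(3) by (simp add: L_monom_def)
    ultimately show "m \<in> ?A \<inter> {m. L_monom \<alpha> m}" using m'(3) by (simp add: monoms_upto_def)
  qed
  then show ?thesis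
    unfolding coeff_specialize[OF finite_atLeastAtMost] L_qs_eq_indicator[OF \<alpha>]
    by (simp add: finite_monoms_upto card_image inj_on_def)
qed

section \<open>Eisenstein's argument\<close>

lemma prime_dvd_choose_shifted:
  fixes p l :: nat
  assumes p: "prime p" and l: "0 < l" "l < p"
  shows "p dvd (p + l - 1) choose l" and "\<not> p\<^sup>2 dvd (p + l - 1) choose l"
proof -
  have "fact l * fact (p - 1) * ((p + l - 1) choose l) = (fact (p - 1 + l) :: nat)"
    using binomial_fact_lemma[of l "p + l - 1"] prime_gt_0_nat[OF p] by (simp add: add.commute)
  also have "\<dots> = fact (p - 1) * pochhammer p l"
  proof -
    have "1 + of_nat (p - 1) = p" using prime_gt_0_nat[OF p] by simp
    then show ?thesis using pochhammer_product'[of "1::nat" "p - 1" l] by (simp add: pochhammer_fact)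
  qed
  also have "pochhammer p l = p * pochhammer (p + 1) (l - 1)"
    using l(1) pochhammer_rec[of p "l - 1"] by simp
  finally have eq: "fact l * ((p + l - 1) choose l) = p * pochhammer (p + 1) (l - 1)"
    by simp
  have not_fact: "\<not> p dvd fact l" using prime_dvd_fact_iff[OF p] l by simp
  have not_poch: "\<not> p dvd pochhammer (p + 1) (l - 1)"
  proof
    assume "p dvd pochhammer (p + 1) (l - 1)"
    then obtain i where "i < l - 1" "p dvd p + 1 + i"
      using p by (auto simp: pochhammer_prod prime_dvd_prod_iff)
    then have "p dvd p + Suc i" by simp
    then have "p dvd Suc i" by (simp only: dvd_add_right_iff dvd_refl)
    then show False using \<open>i < l - 1\<close> l nat_dvd_not_less[of "Suc i" p] by simp
  qed
  show "p dvd (p + l - 1) choose l"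
    using eq not_fact p by (metis dvd_triv_left prime_dvd_mult_iff)
  show "\<not> p\<^sup>2 dvd (p + l - 1) choose l"
  proof
    assume "p\<^sup>2 dvd (p + l - 1) choose l"
    then have "p * p dvd p * pochhammer (p + 1) (l - 1)"
      unfolding eq[symmetric] power2_eq_square by (rule dvd_mult)
    then show False using not_poch prime_gt_0_nat[OF p] by simp
  qed
qed

lemma Eisenstein_degree_0:
  fixes B C :: "int poly" and p :: int
  assumes p: "prime p"
    and lead: "\<not> p dvd lead_coeff B" "\<not> p dvd lead_coeff C"
    and lower: "\<And>k. k < degree B + degree C \<Longrightarrow> p dvd coeff (B * C) k"
    and const: "\<not> p\<^sup>2 dvd coeff (B * C) 0"
  shows "degree B = 0 \<or> degree C = 0"
proof (rule ccontr)
  assume "\<not> (degree B = 0 \<or> degree C = 0)"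
  define i0 where "i0 = (LEAST i. \<not> p dvd coeff B i)"
  define j0 where "j0 = (LEAST j. \<not> p dvd coeff C j)"
  have i0: "\<not> p dvd coeff B i0" "i0 \<le> degree B"
    unfolding i0_def using lead(1) by (rule LeastI, rule Least_le)
  have j0: "\<not> p dvd coeff C j0" "j0 \<le> degree C"
    unfolding j0_def using lead(2) by (rule LeastI, rule Least_le)
  have below_i0: "p dvd coeff B i" if "i < i0" for i
    using not_less_Least[OF that[unfolded i0_def]] by blast
  have below_j0: "p dvd coeff C j" if "j < j0" for j
    using not_less_Least[OF that[unfolded j0_def]] by blast
  have split: "coeff (B * C) (i0 + j0) = coeff B i0 * coeff C j0 +
      (\<Sum>i\<in>{..i0 + j0} - {i0}. coeff B i * coeff C (i0 + j0 - i))"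
    unfolding coeff_mult by (subst sum.remove[of _ i0]) auto
  have rest: "p dvd (\<Sum>i\<in>{..i0 + j0} - {i0}. coeff B i * coeff C (i0 + j0 - i))"
  proof (rule dvd_sum)
    fix i assume "i \<in> {..i0 + j0} - {i0}"
    then have "i < i0 \<or> i0 + j0 - i < j0" by auto
    then show "p dvd coeff B i * coeff C (i0 + j0 - i)" using below_i0 below_j0 by auto
  qed
  have "\<not> p dvd coeff B i0 * coeff C j0" using i0 j0 p by (simp add: prime_dvd_mult_iff)
  then have "\<not> p dvd coeff (B * C) (i0 + j0)" unfolding split using rest by (simp add: dvd_add_left_iff)
  then have "\<not> i0 + j0 < degree B + degree C" using lower by blast
  then have "0 < i0" "0 < j0" using i0(2) j0(2) \<open>\<not> (degree B = 0 \<or> degree C = 0)\<close> by linarith+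
  then have "p * p dvd coeff B 0 * coeff C 0" using below_i0 below_j0 by (simp add: mult_dvd_mono)
  then have "p\<^sup>2 dvd coeff (B * C) 0" by (simp add: coeff_mult_0 power2_eq_square)
  with const show False ..
qed

lemma prime_dvd_card_L_monoms_x0:
  assumes \<alpha>: "composition \<alpha>" and p: "prime p" "sum_list \<alpha> < p" and k: "k < sum_list \<alpha>"
  shows "p dvd card (L_monoms_x0 \<alpha> p k)"
proof (cases "k \<in> (\<lambda>i. sum_list (take i \<alpha>)) ` {..length \<alpha>}")
  case True
  then obtain i where i: "i \<le> length \<alpha>" "k = sum_list (take i \<alpha>)" by blast
  then have "i < length \<alpha>" using k by (metis order.not_eq_order_implies_strict take_all_iff less_irrefl)
  then have \<gamma>: "composition (drop i \<alpha>)" using \<alpha> by (simp add: composition_drop)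
  have "length (drop i \<alpha>) \<le> sum_list \<alpha>"
    using composition_length_le_sum_list[OF \<alpha>] by simp
  then have "0 < length (drop i \<alpha>)" "length (drop i \<alpha>) < p"
    using \<open>i < length \<alpha>\<close> p(2) by simp_all
  then have "p dvd card (L_monoms (drop i \<alpha>) p)"
    unfolding card_L_monoms[OF \<gamma>] by (rule prime_dvd_choose_shifted(1)[OF p(1)])
  then show ?thesis using L_monoms_x0_partial_sum[OF \<alpha> i(1)] i(2) by simp
next
  case False
  then show ?thesis using L_monoms_x0_not_partial_sum[OF \<alpha>] by simp
qed

lemma specialize_L_qs_Eisenstein:
  assumes \<alpha>: "composition \<alpha>" and p: "prime p" "sum_list \<alpha> < p"
  shows "\<And>k. k < sum_list \<alpha> \<Longrightarrow> int p dvd coeff (specialize {0..p} (sum_list \<alpha>) (L_qs \<alpha>)) k"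
    and "\<not> (int p)\<^sup>2 dvd coeff (specialize {0..p} (sum_list \<alpha>) (L_qs \<alpha>)) 0"
proof -
  show "int p dvd coeff (specialize {0..p} (sum_list \<alpha>) (L_qs \<alpha>)) k" if "k < sum_list \<alpha>" for k
    unfolding coeff_specialize_L_qs[OF \<alpha>] using prime_dvd_card_L_monoms_x0[OF \<alpha> p that] by simp
  have "0 < length \<alpha>" "length \<alpha> < p"
    using \<alpha> p(2) composition_length_le_sum_list[OF \<alpha>] by (auto simp: composition_def)
  moreover have "L_monoms_x0 \<alpha> p 0 = L_monoms \<alpha> p"
    using L_monoms_x0_partial_sum[OF \<alpha>, of 0] by simp
  ultimately have "\<not> p\<^sup>2 dvd card (L_monoms_x0 \<alpha> p 0)"
    using prime_dvd_choose_shifted(2)[OF p(1)] card_L_monoms[OF \<alpha>] by simp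
  then show "\<not> (int p)\<^sup>2 dvd coeff (specialize {0..p} (sum_list \<alpha>) (L_qs \<alpha>)) 0"
    unfolding coeff_specialize_L_qs[OF \<alpha>] by (simp flip: of_nat_power)
qed

lemma homogeneous_factor_of_L_qs_degree_0:
  assumes \<alpha>: "composition \<alpha>" and b: "homogeneous d b" and c: "homogeneous e c"
    and de: "d + e = sum_list \<alpha>" and prod: "Kmult b c = L_qs \<alpha>"
  shows "d = 0 \<or> e = 0"
proof -
  obtain p :: nat where p: "prime p" "sum_list \<alpha> < p" using bigger_prime by blast
  define B where "B = specialize {0..p} d b"
  define C where "C = specialize {0..p} e c"
  have BC: "B * C = specialize {0..p} (sum_list \<alpha>) (L_qs \<alpha>)"
    unfolding B_def C_def de[symmetric] prod[symmetric] using b c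
    by (intro specialize_Kmult[symmetric]) (auto simp: homogeneous_def)
  have "b (Poly_Mapping.single 0 d) * c (Poly_Mapping.single 0 e) = 1"
    using Kmult_at_single_homogeneous[OF b c, of 0] L_qs_single[OF \<alpha>, of 0] prod de by simp
  then have units: "b (Poly_Mapping.single 0 d) \<in> {1, -1}" "c (Poly_Mapping.single 0 e) \<in> {1, -1}"
    by (auto simp: zmult_eq_1_iff)
  have lead: "degree B = d" "lead_coeff B = b (Poly_Mapping.single 0 d)"
    "degree C = e" "lead_coeff C = c (Poly_Mapping.single 0 e)"
    using units degree_specialize[of "{0..p}"] unfolding B_def C_def by auto
  have not_dvd_unit: "\<not> int p dvd u" if "u \<in> {1, -1}" for u
    using that prime_gt_1_nat[OF p(1)] by auto
  have "degree B = 0 \<or> degree C = 0"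
  proof (rule Eisenstein_degree_0)
    show "prime (int p)" using p(1) by simp
    show "\<not> int p dvd lead_coeff B" "\<not> int p dvd lead_coeff C"
      using lead(2,4) units not_dvd_unit by simp_all
    show "int p dvd coeff (B * C) k" if "k < degree B + degree C" for k
      unfolding BC using specialize_L_qs_Eisenstein(1)[OF \<alpha> p] that lead(1,3) de by simp
    show "\<not> (int p)\<^sup>2 dvd coeff (B * C) 0"
      unfolding BC using specialize_L_qs_Eisenstein(2)[OF \<alpha> p] .
  qed
  then show ?thesis using lead(1,3) by simp
qed

lemma factor_of_L_qs_is_unit:
  assumes \<alpha>: "composition \<alpha>" and "bounded_degree b" "bounded_degree c"
    and prod: "Kmult b c = L_qs \<alpha>"
  shows "b \<in> {Kconst 1, Kconst (-1)} \<or> c \<in> {Kconst 1, Kconst (-1)}"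
proof -
  have "Kmult b c \<noteq> (\<lambda>_. 0)"
    using prod L_qs_single[OF \<alpha>] by (metis zero_neq_one)
  then obtain d e where de: "d + e = sum_list \<alpha>" and b: "homogeneous d b" and c: "homogeneous e c"
    using homogeneous_factors[OF assms(2,3)] homogeneous_L_qs[of \<alpha>] prod by metis
  have one: "b (Poly_Mapping.single 0 d) * c (Poly_Mapping.single 0 e) = 1"
    using Kmult_at_single_homogeneous[OF b c, of 0] L_qs_single[OF \<alpha>, of 0] prod de by simp
  from homogeneous_factor_of_L_qs_degree_0[OF \<alpha> b c de prod] show ?thesis
  proof
    assume "d = 0"
    then show ?thesis
      using homogeneous_0_imp_Kconst[of b] b one by (auto simp: zmult_eq_1_iff)
  next
    assume "e = 0"
    then show ?thesis
      using homogeneous_0_imp_Kconst[of c] c one by (auto simp: zmult_eq_1_iff)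
  qed
qed

lemma K_ring_carrier_update_simps:
  "(\<otimes>\<^bsub>K_ring\<lparr>carrier := S\<rparr>\<^esub>) = Kmult" "\<one>\<^bsub>K_ring\<lparr>carrier := S\<rparr>\<^esub> = Kone"
  "\<zero>\<^bsub>K_ring\<lparr>carrier := S\<rparr>\<^esub> = (\<lambda>_. 0)" "carrier (K_ring\<lparr>carrier := S\<rparr>) = S"
  by (simp_all add: K_ring_def)

lemma properfactor_L_qs_in_Units:
  assumes \<alpha>: "composition \<alpha>"
    and S: "S \<subseteq> {f. bounded_degree f}" "Kconst 1 \<in> S" "Kconst (-1) \<in> S"
    and b: "b \<in> S" and pf: "properfactor (K_ring\<lparr>carrier := S\<rparr>) b (L_qs \<alpha>)"
  shows "b \<in> Units (K_ring\<lparr>carrier := S\<rparr>)"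
proof -
  note ops = K_ring_carrier_update_simps[of S]
  obtain c where c: "c \<in> S" "L_qs \<alpha> = Kmult b c"
    using pf unfolding properfactor_def factor_def ops by blast
  have not_multiple: "b \<noteq> Kmult (L_qs \<alpha>) c'" if "c' \<in> S" for c'
    using that pf unfolding properfactor_def factor_def ops by blast
  have "bounded_degree b" "bounded_degree c" using S(1) b c(1) by blast+
  from factor_of_L_qs_is_unit[OF \<alpha> this c(2)[symmetric]]
  consider u where "u \<in> {1, -1}" "b = Kconst u" | u where "u \<in> {1, -1}" "c = Kconst u"
    by blast
  then show ?thesis
  proof cases
    case (1 u)
    then show ?thesis
      using S Kmult_Kconst_sign[OF 1(1)] unfolding Units_def ops by blast
  next
    case (2 u)
    \<comment> \<open>then \<open>b = \<plusminus>L\<^sub>\<alpha>\<close>, so \<open>L\<^sub>\<alpha>\<close> divides \<open>b\<close>, contradicting properness\<close>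
    have "L_qs \<alpha> = (\<lambda>m. b m * u)" using c(2) 2(2) by (simp add: Kmult_Kconst_right)
    then have "Kmult (L_qs \<alpha>) (Kconst u) = (\<lambda>m. b m * u * u)" by (simp add: Kmult_Kconst_right)
    also have "\<dots> = b" using 2(1) by auto
    finally have "b = Kmult (L_qs \<alpha>) (Kconst u)" ..
    moreover have "Kconst u \<in> S" using S(2,3) 2(1) by auto
    ultimately show ?thesis using not_multiple by blast
  qed
qed

lemma ring_irreducible_L_qs:
  assumes \<alpha>: "composition \<alpha>"
    and S: "S \<subseteq> {f. bounded_degree f}" "Kconst 1 \<in> S" "Kconst (-1) \<in> S"
  shows "ring_irreducible\<^bsub>K_ring\<lparr>carrier := S\<rparr>\<^esub> (L_qs \<alpha>)"
proof -
  note ops = K_ring_carrier_update_simps[of S]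
  have "L_qs \<alpha> \<noteq> \<zero>\<^bsub>K_ring\<lparr>carrier := S\<rparr>\<^esub>"
    unfolding ops using L_qs_single[OF \<alpha>] by (metis zero_neq_one)
  moreover have "L_qs \<alpha> \<notin> Units (K_ring\<lparr>carrier := S\<rparr>)"
  proof
    assume "L_qs \<alpha> \<in> Units (K_ring\<lparr>carrier := S\<rparr>)"
    then obtain x where "Kmult x (L_qs \<alpha>) = Kone" unfolding Units_def ops by blast
    then have "x 0 * L_qs \<alpha> 0 = 1" using Kmult_at_0 by (metis Kone_def)
    then show False by (simp add: L_qs_eq_indicator[OF \<alpha>] not_L_monom_0[OF \<alpha>])
  qed
  moreover have "\<forall>b\<in>carrier (K_ring\<lparr>carrier := S\<rparr>).
      properfactor (K_ring\<lparr>carrier := S\<rparr>) b (L_qs \<alpha>) \<longrightarrow> b \<in> Units (K_ring\<lparr>carrier := S\<rparr>)"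
    using properfactor_L_qs_in_Units[OF \<alpha> S] unfolding ops by blast
  ultimately show ?thesis unfolding ring_irreducible_def Divisibility.irreducible_def by blast
qed

theorem proposition8p11:
  assumes "composition \<alpha>"
  shows "L_qs \<alpha> \<in> carrier QSym_ring \<and> ring_irreducible\<^bsub>QSym_ring\<^esub> (L_qs \<alpha>)
       \<and> L_qs \<alpha> \<in> carrier K_ring \<and> ring_irreducible\<^bsub>K_ring\<^esub> (L_qs \<alpha>)"
proof (intro conjI)
  have K: "K_ring\<lparr>carrier := {f. bounded_degree f}\<rparr> = K_ring" by (simp add: K_ring_def)
  have Q: "K_ring\<lparr>carrier := {f. quasi_symmetric f}\<rparr> = QSym_ring" by (simp add: QSym_ring_def)
  have QK: "{f. quasi_symmetric f} \<subseteq> {f. bounded_degree f}"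
    using quasi_symmetric_imp_bounded_degree by blast
  have Kconst_in: "Kconst u \<in> {f. quasi_symmetric f}" "Kconst u \<in> {f. bounded_degree f}" for u
    using quasi_symmetric_Kconst QK by blast+
  have "carrier QSym_ring = {f. quasi_symmetric f}" "carrier K_ring = {f. bounded_degree f}"
    by (simp_all add: QSym_ring_def K_ring_def)
  then show "L_qs \<alpha> \<in> carrier QSym_ring" "L_qs \<alpha> \<in> carrier K_ring"
    using quasi_symmetric_L_qs[of \<alpha>] QK by auto
  show "ring_irreducible\<^bsub>QSym_ring\<^esub> (L_qs \<alpha>)"
    using ring_irreducible_L_qs[OF assms QK Kconst_in(1) Kconst_in(1)] unfolding Q .
  show "ring_irreducible\<^bsub>K_ring\<^esub> (L_qs \<alpha>)"
    using ring_irreducible_L_qs[OF assms order_refl Kconst_in(2) Kconst_in(2)] unfolding K .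
qed

end
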